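(* Let $r\geq 3$, let $X$ be a finite set of cardinality $n\geq 1$, and let $A_1,\dots,A_r\subseteq X$. For $k\in\{1,\dots,r\}$ put $$S_k=\sum_{1\leq i_1<\dots<i_k\leq r}\left|A_{i_1}\cap\dots\cap A_{i_k}\right|.$$ Then for every $1\leq k\leq r$, $$S_k\geq\binom{\lfloor S_1/n\rfloor}{k-1}\left(S_1-\frac{k-1}{k}\left(\lfloor S_1/n\rfloor+1\right)n\right).$$ *)

theory Defs
  imports Complex_Main
begin

definition S :: "nat \<Rightarrow> (nat \<Rightarrow> 'a set) \<Rightarrow> nat \<Rightarrow> nat" where
  "S r A k = (\<Sum>K\<in>{K. K \<subseteq> {1..r} \<and> card K = k}. card (\<Inter>i\<in>K. A i))"

end

theory Submission
  imports Defs
begin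

text \<open>Let d x be the number of sets A i containing x. Counting the pairs (K, x) with x in every
  A i, i in K, gives S k = \<Sum>x\<in>X. d x choose k, in particular S 1 = \<Sum>x\<in>X. d x.
  The map d \<mapsto> d choose k is discretely convex, so it lies above its secant through
  m and m + 1, where m = S 1 div n; that secant is the line
  (m choose (k - 1)) * (d - (k - 1) / k * (m + 1)). Summing this bound over X yields the
  theorem.\<close>

definition cover_degree :: "nat \<Rightarrow> (nat \<Rightarrow> 'a set) \<Rightarrow> 'a \<Rightarrow> nat" where
  "cover_degree r A x = card {i \<in> {1..r}. x \<in> A i}"

lemma S_eq_sum_choose_cover_degree:
  fixes X :: "'a set" and A :: "nat \<Rightarrow> 'a set"
  assumes "finite X" and "\<And>i. i \<in> {1..r} \<Longrightarrow> A i \<subseteq> X" and "1 \<le> k"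
  shows "S r A k = (\<Sum>x\<in>X. cover_degree r A x choose k)"
proof -
  define I where "I x = {i \<in> {1..r}. x \<in> A i}" for x
  define KK where "KK = {K. K \<subseteq> {1..r} \<and> card K = k}"
  have "finite KK"
    unfolding KK_def by (rule finite_subset[of _ "Pow {1..r}"]) auto
  have inter_eq: "(\<Inter>i\<in>K. A i) = {x \<in> X. K \<subseteq> I x}" if "K \<in> KK" for K
  proof -
    \<comment> \<open>For K = {} the intersection would be UNIV rather than X.\<close>
    have "K \<noteq> {}" using that \<open>1 \<le> k\<close> unfolding KK_def by auto
    then show ?thesis using that assms(2) unfolding KK_def I_def by fastforce
  qed
  have "S r A k = (\<Sum>K\<in>KK. card {x \<in> X. K \<subseteq> I x})"
    unfolding S_def KK_def[symmetric] by (rule sum.cong) (simp_all add: inter_eq)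
  also have "\<dots> = (\<Sum>K\<in>KK. \<Sum>x\<in>{x \<in> X. K \<subseteq> I x}. 1)"
    by simp
  also have "\<dots> = (\<Sum>x\<in>X. \<Sum>K\<in>{K \<in> KK. K \<subseteq> I x}. 1)"
    using \<open>finite KK\<close> \<open>finite X\<close> by (rule sum.swap_restrict)
  also have "\<dots> = (\<Sum>x\<in>X. card {K. K \<subseteq> I x \<and> card K = k})"
    unfolding KK_def I_def by (intro sum.cong) (auto intro!: arg_cong[where f = card])
  also have "\<dots> = (\<Sum>x\<in>X. card (I x) choose k)"
    by (intro sum.cong refl n_subsets) (simp add: I_def)
  finally show ?thesis
    unfolding I_def cover_degree_def .
qed

lemma real_Suc_times_choose_Suc:
  "real (Suc j) * real (m choose Suc j) = (real m - real j) * real (m choose j)"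
  using gbinomial_mult_1[of "real m" j] by (simp add: binomial_gbinomial algebra_simps)

lemma choose_Suc_ge_secant:
  "real (m choose Suc j) + real (m choose j) * (real d - real m) \<le> real (d choose Suc j)"
proof -
  define gap where
    "gap d = real (d choose Suc j) - real (m choose Suc j) - real (m choose j) * (real d - real m)"
    for d
  txt \<open>The increments of gap have the sign of d - m, so gap is smallest at m, where it
    vanishes.\<close>
  have gap_Suc: "gap (Suc d) = gap d + (real (d choose j) - real (m choose j))" for d
    by (simp add: gap_def algebra_simps)
  have "gap d \<ge> 0"
  proof (cases "d \<le> m")
    case True
    then show ?thesis
    proof (induction d rule: inc_induct)
      case (step d)
      with binomial_right_mono[of d m j] show ?case
        by (simp add: gap_Suc)
    qed (simp add: gap_def)
  next
    case False
    then have "m \<le> d" by simp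
    then show ?thesis
    proof (induction d rule: dec_induct)
      case (step d)
      with binomial_right_mono[of m d j] show ?case
        by (simp add: gap_Suc)
    qed (simp add: gap_def)
  qed
  then show ?thesis
    by (simp add: gap_def)
qed

lemma choose_ge_secant_line:
  assumes "1 \<le> k"
  shows "real (m choose (k - 1)) * (real d - real (k - 1) / real k * (real m + 1))
    \<le> real (d choose k)"
proof -
  obtain j where k: "k = Suc j"
    using assms by (cases k) auto
  have "real (m choose j) * (real d - real j / real (Suc j) * (real m + 1))
      = real (m choose Suc j) + real (m choose j) * (real d - real m)"
    using real_Suc_times_choose_Suc[of j m] by (simp add: field_simps)
  with choose_Suc_ge_secant[of m j d] show ?thesis
    unfolding k by simp
qed

theorem theorem3:
  fixes X :: "'a set" and A :: "nat \<Rightarrow> 'a set" and r n k :: nat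
  assumes "r \<ge> 3"
    and "finite X" and "card X = n" and "n \<ge> 1"
    and "\<And>i. i \<in> {1..r} \<Longrightarrow> A i \<subseteq> X"
    and "1 \<le> k" and "k \<le> r"
  shows "real (S r A k) \<ge>
     real ((S r A 1 div n) choose (k - 1)) *
       (real (S r A 1) - (real (k - 1) / real k) * (real (S r A 1 div n) + 1) * real n)"
proof -
  define m where "m = S r A 1 div n"
  define line where
    "line d = real (m choose (k - 1)) * (real d - real (k - 1) / real k * (real m + 1))" for d
  have S_1: "real (S r A 1) = (\<Sum>x\<in>X. real (cover_degree r A x))"
    using S_eq_sum_choose_cover_degree[OF assms(2,5), where k = 1] by simp
  have "real (m choose (k - 1)) * (real (S r A 1) - real (k - 1) / real k * (real m + 1) * real n)
      = (\<Sum>x\<in>X. line (cover_degree r A x))"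
    unfolding S_1 line_def using assms(3)
    by (simp add: sum_distrib_left sum_subtractf algebra_simps)
  also have "\<dots> \<le> (\<Sum>x\<in>X. real (cover_degree r A x choose k))"
    unfolding line_def by (intro sum_mono choose_ge_secant_line assms(6))
  also have "\<dots> = real (S r A k)"
    using S_eq_sum_choose_cover_degree[OF assms(2,5,6)] by simp
  finally show ?thesis
    unfolding m_def by (simp add: mult.assoc)
qed

end
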